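(* Let $\gamma\in(0,1)$ and let $\rho(w,t)>0$, $w>0$, $t\ge0$, be a sufficiently smooth solution of the yard-sale model equation $$\partial_t\rho(w,t)=\partial_w^2\Big[\Big(\frac{\gamma}{2}\int_0^\infty \min(w,x)^2\,\rho(x,t)\,dx\Big)\rho(w,t)\Big],$$ with $\rho(0,t)=0$, $\lim_{w\to\infty}\rho(w,t)=0$ for $t>0$, and initial condition $\rho_0$ a positive probability density on $(0,\infty)$ with $\int_0^\infty\rho_0(w)\,dw=1=\int_0^\infty w\,\rho_0(w)\,dw$; assume also that the boundary terms at $w=0$ vanish, i.e. $D\rho\to0$ and $w\,\partial_w(D\rho)\to0$ and $\partial_w(D\rho)\to 0$ as $w\to0^+$, where $D[w,t,\rho]=\frac{\gamma}{2}\int_0^\infty\min(w,x)^2\rho(x,t)\,dx$. Let $F(w,t)=\int_0^w\rho(y,t)\,dy$, $G(\cdot,t)$ its inverse, and $\mathcal{L}(f,t)=\int_0^{G(f,t)}y\,\rho(y,t)\,dy$ the Lorenz curve. Then for $f\in(0,1)$, $t>0$, $$\partial_t\mathcal{L}(f,t)=-\frac{1}{\partial_f^2\mathcal{L}(f,t)}\,\frac{\gamma}{2}\int_0^1\min\big(\partial_g\mathcal{L}(g,t),\,\partial_f\mathcal{L}(f,t)\big)^2\,dg .$$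
   Context: Here $\min(a,b)$ is the minimum of $a$ and $b$. The equation models the evolution of the density of agents in wealth space $w>0$; it conserves total probability and total wealth (first moment), both normalized to $1$. *)

theory Defs
  imports "HOL-Analysis.Analysis"
begin

definition ysm_D :: "real \<Rightarrow> (real \<Rightarrow> real \<Rightarrow> real) \<Rightarrow> real \<Rightarrow> real \<Rightarrow> real" where
  "ysm_D \<gamma> \<rho> w t = \<gamma> / 2 * (LBINT x:{0<..}. (min w x)\<^sup>2 * \<rho> x t)"

definition ysm_F :: "(real \<Rightarrow> real \<Rightarrow> real) \<Rightarrow> real \<Rightarrow> real \<Rightarrow> real" where
  "ysm_F \<rho> w t = (LBINT y:{0<..w}. \<rho> y t)"

definition ysm_G :: "(real \<Rightarrow> real \<Rightarrow> real) \<Rightarrow> real \<Rightarrow> real \<Rightarrow> real" where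
  "ysm_G \<rho> f t = (THE w. 0 < w \<and> ysm_F \<rho> w t = f)"

definition lorenz :: "(real \<Rightarrow> real \<Rightarrow> real) \<Rightarrow> real \<Rightarrow> real \<Rightarrow> real" where
  "lorenz \<rho> f t = (LBINT y:{0<..ysm_G \<rho> f t}. y * \<rho> y t)"

end

(*
  Write F(.,t) for the distribution function, G(.,t) for its inverse and
  M(w,t) = int_0^w y rho(y,t) dy, so that L(f,t) = M(G(f,t),t).

  In f this gives d_f L = G and d_f^2 L = 1/rho(G), and the substitution g = F(x) turns
  int_0^1 min(G(g), G(f))^2 dg into int_0^oo min(G(f), x)^2 rho(x) dx = 2 D(G(f)) / gamma.

  In t, the constraint F(G(f,s),s) = f makes the motion of the quantile contribute only to
  second order: with v = G(f,t) one has |M(G) - M(v) - v (F(G) - F(v))| <= |G - v| |F(G) - F(v)|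
  at each time. Hence d_t L(f,t) = int_0^v (y - v) d_t rho(y,t) dy, and inserting
  d_t rho = d_w^2 (D rho) and integrating by parts twice (the boundary terms at 0 vanish) gives
  d_t L = -(D rho)(v) = -(1 / d_f^2 L) D(v).
*)

theory Submission
  imports Defs
begin

lemma continuous_on_slice:
  assumes "continuous_on (A \<times> B) (\<lambda>(x, y). h x y)" and "y \<in> B"
  shows "continuous_on A (\<lambda>x. h x y)"
proof -
  have "continuous_on A (\<lambda>x. (x, y))" by (intro continuous_intros)
  then show ?thesis
    using continuous_on_compose2[OF assms(1), of A "\<lambda>x. (x, y)"] assms(2) by auto
qed

lemma has_real_derivative_set_integral_Ioc:
  fixes q :: "real \<Rightarrow> real"
  assumes cont: "continuous_on {0<..} q" and int: "set_integrable lborel {0<..} q" and "0 < w"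
  shows "((\<lambda>u. LBINT y:{0<..u}. q y) has_real_derivative q w) (at w)"
proof -
  define c where "c = w / 2"
  have c: "0 < c" "c < w" using \<open>0 < w\<close> by (auto simp: c_def)
  have split: "(LBINT y:{0<..u}. q y) = (LBINT y:{0<..c}. q y) + (LBINT y=c..u. q y)"
    if "u \<in> {c<..<2 * w}" for u
  proof -
    have "{0<..u} = {0<..c} \<union> {c<..u}" using that c by auto
    moreover have "(LBINT y:{0<..c} \<union> {c<..u}. q y) = (LBINT y:{0<..c}. q y) + (LBINT y:{c<..u}. q y)"
      by (rule set_integral_Un) (use c in \<open>auto intro!: set_integrable_subset[OF int]\<close>)
    ultimately show ?thesis
      using that by (simp add: interval_integral_Ioc)
  qed
  have "continuous_on {c..2 * w} q" by (rule continuous_on_subset[OF cont]) (use c in auto)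
  then have "((\<lambda>u. LBINT y=c..u. q y) has_vector_derivative q w) (at w within {c..2 * w})"
    using c by (intro interval_integral_FTC2) auto
  then have "((\<lambda>u. (LBINT y:{0<..c}. q y) + (LBINT y=c..u. q y)) has_real_derivative q w) (at w)"
    using c by (auto simp: at_within_Icc_at has_real_derivative_iff_has_vector_derivative
        intro!: derivative_eq_intros)
  then show ?thesis
    by (rule has_field_derivative_transform_within_open[where S="{c<..<2 * w}"]) (use c split in auto)
qed

lemma integral_dominated_convergence_at:
  fixes s :: "real \<Rightarrow> 'a \<Rightarrow> 'b::{banach, second_countable_topology}" and w :: "'a \<Rightarrow> real"
  assumes "f \<in> borel_measurable M" and meas: "\<forall>\<^sub>F r in at t within S. s r \<in> borel_measurable M"
    and "integrable M w"
    and lim: "AE x in M. ((\<lambda>r. s r x) \<longlongrightarrow> f x) (at t within S)"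
    and bound: "\<forall>\<^sub>F r in at t within S. AE x in M. norm (s r x) \<le> w x"
  shows "((\<lambda>r. integral\<^sup>L M (s r)) \<longlongrightarrow> integral\<^sup>L M f) (at t within S)"
  unfolding tendsto_at_iff_sequentially comp_def
proof (intro allI impI)
  fix X :: "nat \<Rightarrow> real" assume "\<forall>i. X i \<in> S - {t}" "X \<longlonglongrightarrow> t"
  then have X: "filterlim X (at t within S) sequentially"
    by (intro filterlim_at_withinI) auto
  from filterlim_iff[THEN iffD1, OF X, rule_format, OF eventually_conj[OF meas bound]]
  obtain N where N: "\<And>n. N \<le> n \<Longrightarrow> s (X n) \<in> borel_measurable M \<and>
      (AE x in M. norm (s (X n) x) \<le> w x)"
    by (auto simp: eventually_sequentially)
  show "(\<lambda>n. integral\<^sup>L M (s (X n))) \<longlonglongrightarrow> integral\<^sup>L M f"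
  proof (rule LIMSEQ_offset, rule integral_dominated_convergence)
    show "AE x in M. (\<lambda>n. s (X (n + N)) x) \<longlonglongrightarrow> f x"
      using lim by eventually_elim (intro LIMSEQ_ignore_initial_segment filterlim_compose[OF _ X])
    show "AE x in M. norm (s (X (n + N)) x) \<le> w x" "s (X (n + N)) \<in> borel_measurable M" for n
      using N[of "n + N"] by auto
  qed (use assms in auto)
qed

lemma has_real_derivative_integral:
  fixes u u' :: "'a \<Rightarrow> real \<Rightarrow> real"
  assumes "0 < e"
    and int: "\<And>s. s \<in> ball t e \<Longrightarrow> integrable M (\<lambda>x. u x s)"
    and meas: "(\<lambda>x. u' x t) \<in> borel_measurable M"
    and deriv: "\<And>x s. s \<in> ball t e \<Longrightarrow> (u x has_real_derivative u' x s) (at s)"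
    and bound: "\<And>x s. s \<in> ball t e \<Longrightarrow> \<bar>u' x s\<bar> \<le> g x"
    and "integrable M g"
  shows "((\<lambda>s. \<integral>x. u x s \<partial>M) has_real_derivative (\<integral>x. u' x t \<partial>M)) (at t)"
proof -
  define Q where "Q s = (\<lambda>x. (u x s - u x t) / (s - t))" for s
  have near: "\<forall>\<^sub>F s in at t. s \<in> ball t e"
    using eventually_at_ball[OF \<open>0 < e\<close>, of t UNIV] by simp
  have "((\<lambda>s. integral\<^sup>L M (Q s)) \<longlongrightarrow> (\<integral>x. u' x t \<partial>M)) (at t)"
  proof (rule integral_dominated_convergence_at[where w=g])
    show "\<forall>\<^sub>F s in at t. Q s \<in> borel_measurable M"
      using near by eventually_elim
        (use \<open>0 < e\<close> in \<open>auto simp: Q_def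
          intro!: borel_measurable_integrable integrable_divide_zero integrable_diff int\<close>)
    show "AE x in M. ((\<lambda>s. Q s x) \<longlongrightarrow> u' x t) (at t)"
      using deriv[of t] \<open>0 < e\<close> by (auto simp: Q_def has_field_derivative_iff)
    show "\<forall>\<^sub>F s in at t. AE x in M. norm (Q s x) \<le> g x"
      using near
    proof eventually_elim
      case (elim s)
      have "norm (u x s - u x t) \<le> g x * norm (s - t)" for x
        by (rule field_differentiable_bound[OF convex_ball])
          (use elim \<open>0 < e\<close> in \<open>auto intro!: has_field_derivative_at_within[OF deriv] bound\<close>)
      moreover have "0 \<le> g x" for x
        using bound[of t x] \<open>0 < e\<close> by (auto intro: order_trans[OF abs_ge_zero])
      ultimately show ?case
        by (intro AE_I2) (auto simp: Q_def divide_le_eq abs_divide mult.commute)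
    qed
  qed (use meas assms in auto)
  moreover have "\<forall>\<^sub>F s in at t.
      integral\<^sup>L M (Q s) = ((\<integral>x. u x s \<partial>M) - (\<integral>x. u x t \<partial>M)) / (s - t)"
    using near by eventually_elim (use int \<open>0 < e\<close> in \<open>simp add: Q_def\<close>)
  ultimately show ?thesis
    unfolding has_field_derivative_iff by (rule Lim_transform_eventually)
qed

lemma set_integral_Ioc_Taylor_remainder:
  fixes P J r :: "real \<Rightarrow> real"
  assumes "0 < v"
    and dP: "\<And>y. 0 < y \<Longrightarrow> (P has_real_derivative J y) (at y)"
    and dJ: "\<And>y. 0 < y \<Longrightarrow> (J has_real_derivative r y) (at y)"
    and cont: "continuous_on {0<..} r" and int: "set_integrable lborel {0<..v} r"
    and P0: "(P \<longlongrightarrow> 0) (at_right 0)" and J0: "(J \<longlongrightarrow> 0) (at_right 0)"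
  shows "(LBINT y:{0<..v}. (y - v) * r y) = - P v"
proof -
  define F where "F y = (y - v) * J y - P y" for y
  have dF: "(F has_real_derivative (y - v) * r y) (at y)" if "0 < y" for y
    unfolding F_def using that
    by (auto intro!: derivative_eq_intros dP dJ simp: algebra_simps)
  have int_r: "set_integrable lborel (einterval (ereal 0) (ereal v)) r"
    by (rule set_integrable_subset[OF int]) (auto simp: einterval_iff)
  have "set_integrable lborel (einterval (ereal 0) (ereal v)) (\<lambda>y. (y - v) * r y)"
  proof (rule set_integrable_bound[OF set_integrable_mult_right[OF int_r, of v]])
    have "(\<lambda>y. indicator (einterval (ereal 0) (ereal v)) y * r y) \<in> borel_measurable lborel"
      using int_r by (simp add: set_integrable_def borel_measurable_integrable)
    then show "set_borel_measurable lborel (einterval (ereal 0) (ereal v)) (\<lambda>y. (y - v) * r y)"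
      unfolding set_borel_measurable_def by (simp add: mult.left_commute)
    show "AE y in lborel. y \<in> einterval (ereal 0) (ereal v) \<longrightarrow> norm ((y - v) * r y) \<le> norm (v * r y)"
      by (intro AE_I2) (auto simp: einterval_iff abs_mult intro!: mult_right_mono)
  qed
  then have "(LBINT y=ereal 0..ereal v. (y - v) * r y) = F v - 0"
  proof (rule interval_integral_FTC_integrable[rotated 3])
    show "((F \<circ> real_of_ereal) \<longlongrightarrow> 0) (at_right (ereal 0))"
      unfolding ereal_tendsto_simps1 F_def
      by (auto intro!: tendsto_eq_intros P0 J0)
    have "(F \<longlongrightarrow> F v) (at_left v)"
      using DERIV_isCont[OF dF[OF \<open>0 < v\<close>]] by (simp add: isCont_def filterlim_at_split)
    then show "((F \<circ> real_of_ereal) \<longlongrightarrow> F v) (at_left (ereal v))"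
      unfolding ereal_tendsto_simps1 .
  qed (use \<open>0 < v\<close> cont in \<open>auto simp: has_real_derivative_iff_has_vector_derivative[symmetric] interior_open
         intro!: dF continuous_intros continuous_on_interior[OF cont]\<close>)
  then show ?thesis
    using \<open>0 < v\<close> by (simp add: F_def interval_integral_Ioc)
qed

lemma DERIV_sign_imp_min:
  fixes f f' :: "real \<Rightarrow> real"
  assumes deriv: "\<And>z. min v x \<le> z \<Longrightarrow> z \<le> max v x \<Longrightarrow> (f has_real_derivative f' z) (at z)"
    and sign: "\<And>z. min v x \<le> z \<Longrightarrow> z \<le> max v x \<Longrightarrow> 0 \<le> (z - v) * f' z"
  shows "f v \<le> f x"
proof (cases v x rule: linorder_cases)
  case less
  then obtain z where z: "v < z" "z < x" and mvt: "f x - f v = (x - v) * f' z"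
    using MVT2[OF less, of f f'] deriv by auto
  have "0 \<le> f' z"
    using sign[of z] z by (simp add: zero_le_mult_iff)
  then have "0 \<le> (x - v) * f' z"
    using z by simp
  then show ?thesis
    using mvt by linarith
next
  case greater
  then obtain z where z: "x < z" "z < v" and mvt: "f v - f x = (v - x) * f' z"
    using MVT2[OF greater, of f f'] deriv by auto
  have "f' z \<le> 0"
    using sign[of z] z by (simp add: zero_le_mult_iff)
  then have "(v - x) * f' z \<le> 0"
    using z by (simp add: mult_nonneg_nonpos)
  then show ?thesis
    using mvt by linarith
qed simp

lemma set_integrable_continuous_on_bound:
  fixes f g :: "real \<Rightarrow> real"
  assumes "S \<in> sets borel" and "continuous_on S f" and "set_integrable lborel S g"
    and "\<And>x. x \<in> S \<Longrightarrow> \<bar>f x\<bar> \<le> g x"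
  shows "set_integrable lborel S f"
proof (rule set_integrable_bound[OF assms(3)])
  show "set_borel_measurable lborel S f"
    unfolding set_borel_measurable_def
    using borel_measurable_continuous_on_indicator[OF assms(1,2)] by simp
  show "AE x in lborel. x \<in> S \<longrightarrow> norm (f x) \<le> norm (g x)"
    using assms(4) by (intro AE_I2) (auto intro: order_trans[OF _ abs_ge_self])
qed

locale wealth_density =
  fixes p :: "real \<Rightarrow> real"
  assumes density_pos: "\<And>w. 0 < w \<Longrightarrow> 0 < p w"
    and density_continuous: "continuous_on {0<..} p"
    and density_integrable: "set_integrable lborel {0<..} p"
    and total_mass: "(LBINT w:{0<..}. p w) = 1"
    and moment_integrable: "set_integrable lborel {0<..} (\<lambda>w. w * p w)"
begin

definition cdf :: "real \<Rightarrow> real" where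
  "cdf w = (LBINT y:{0<..w}. p y)"

definition quantile :: "real \<Rightarrow> real" where
  "quantile f = (THE w. 0 < w \<and> cdf w = f)"

definition partial_moment :: "real \<Rightarrow> real" where
  "partial_moment w = (LBINT y:{0<..w}. y * p y)"

lemma cdf_has_real_derivative: "0 < w \<Longrightarrow> (cdf has_real_derivative p w) (at w)"
  unfolding cdf_def[abs_def]
  by (rule has_real_derivative_set_integral_Ioc[OF density_continuous density_integrable])

lemma partial_moment_has_real_derivative:
  "0 < w \<Longrightarrow> (partial_moment has_real_derivative w * p w) (at w)"
  unfolding partial_moment_def[abs_def]
  by (rule has_real_derivative_set_integral_Ioc[OF _ moment_integrable])
    (auto intro!: continuous_intros density_continuous)

lemma set_integrable_bounded_mult:
  assumes "continuous_on {0<..W} q" and "\<And>y. 0 < y \<Longrightarrow> y \<le> W \<Longrightarrow> \<bar>q y\<bar> \<le> C"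
  shows "set_integrable lborel {0<..W} (\<lambda>y. q y * p y)"
proof (rule set_integrable_continuous_on_bound[where g="\<lambda>y. C * p y"])
  show "continuous_on {0<..W} (\<lambda>y. q y * p y)"
    by (intro continuous_intros assms(1) continuous_on_subset[OF density_continuous]) auto
  show "set_integrable lborel {0<..W} (\<lambda>y. C * p y)"
    by (intro set_integrable_mult_right set_integrable_subset[OF density_integrable]) auto
  show "\<bar>q y * p y\<bar> \<le> C * p y" if "y \<in> {0<..W}" for y
    using assms(2)[of y] density_pos[of y] that by (simp add: abs_mult mult_right_mono)
qed simp

lemma cdf_less_iff:
  assumes "0 < a" "0 < b"
  shows "cdf a < cdf b \<longleftrightarrow> a < b"
proof -
  have "cdf x < cdf y" if "0 < x" "x < y" for x y
    using that by (intro DERIV_pos_imp_increasing[OF \<open>x < y\<close>])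
      (auto intro!: exI cdf_has_real_derivative density_pos)
  then show ?thesis
    using assms by (metis linorder_neq_iff order_less_asym)
qed

lemma cdf_le_iff: "0 < a \<Longrightarrow> 0 < b \<Longrightarrow> cdf a \<le> cdf b \<longleftrightarrow> a \<le> b"
  using cdf_less_iff[of b a] by (simp add: not_less[symmetric])

lemma tendsto_cdf_at_top: "(cdf \<longlongrightarrow> 1) at_top"
proof -
  have "integrable lborel (\<lambda>x. indicator {0<..} x * p x)"
    using density_integrable by (simp add: set_integrable_def)
  from tendsto_integral_at_top[OF _ this]
  have "((\<lambda>y. LINT x|lborel. indicator {..y} x * (indicator {0<..} x * p x)) \<longlongrightarrow> 1) at_top"
    using total_mass by (simp add: set_lebesgue_integral_def)
  moreover have "indicator {..y} x * (indicator {0<..} x * p x) = indicator {0<..y} x * p x"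
    for x y :: real
    by (auto simp: indicator_def)
  ultimately show ?thesis
    by (simp add: cdf_def[abs_def] set_lebesgue_integral_def)
qed

lemma tendsto_cdf_at_right_0: "(cdf \<longlongrightarrow> 0) (at_right 0)"
proof -
  have "((\<lambda>w. LINT x|lborel. indicator {0<..w} x * p x)
      \<longlongrightarrow> integral\<^sup>L lborel (\<lambda>x::real. 0)) (at_right 0)"
  proof (rule integral_dominated_convergence_at[where w="\<lambda>x. indicator {0<..} x * p x"])
    show "integrable lborel (\<lambda>x. indicator {0<..} x * p x)"
      using density_integrable by (simp add: set_integrable_def)
    have "set_integrable lborel {0<..w} p" for w
      by (rule set_integrable_subset[OF density_integrable]) auto
    then show "\<forall>\<^sub>F w in at_right 0. (\<lambda>x. indicator {0<..w} x * p x) \<in> borel_measurable lborel"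
      by (intro always_eventually allI borel_measurable_integrable) (simp add: set_integrable_def)
    show "AE x in lborel. ((\<lambda>w. indicator {0<..w} x * p x) \<longlongrightarrow> 0) (at_right 0)"
    proof (intro AE_I2 tendsto_eventually)
      fix x :: real
      show "\<forall>\<^sub>F w in at_right 0. indicator {0<..w} x * p x = 0"
        unfolding eventually_at_right_field by (cases "0 < x") (auto simp: indicator_def intro: exI[of _ 1])
    qed
    show "\<forall>\<^sub>F w in at_right 0. AE x in lborel. norm (indicator {0<..w} x * p x) \<le> indicator {0<..} x * p x"
      by (intro always_eventually allI AE_I2) (auto simp: indicator_def less_imp_le[OF density_pos])
  qed simp
  then show ?thesis
    by (simp add: cdf_def[abs_def] set_lebesgue_integral_def)
qed

lemma cdf_bounds:
  assumes "0 < w"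
  shows "0 < cdf w" "cdf w < 1"
proof -
  have "0 \<le> cdf (w / 2)"
    by (rule tendsto_upperbound[OF tendsto_cdf_at_right_0])
      (use assms in \<open>auto simp: eventually_at_right_field cdf_le_iff intro!: exI[of _ "w / 2"]\<close>)
  moreover have "cdf (2 * w) \<le> 1"
    by (rule tendsto_lowerbound[OF tendsto_cdf_at_top])
      (use assms in \<open>auto simp: eventually_at_top_linorder cdf_le_iff intro!: exI[of _ "2 * w"]\<close>)
  ultimately show "0 < cdf w" "cdf w < 1"
    using cdf_less_iff[of "w / 2" w] cdf_less_iff[of w "2 * w"] assms by auto
qed

lemma ex1_cdf_eq:
  assumes "0 < f" "f < 1"
  shows "\<exists>!w. 0 < w \<and> cdf w = f"
proof -
  have "\<forall>\<^sub>F a in at_right 0. 0 < a \<and> cdf a < f"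
    using eventually_at_right_less order_tendstoD(2)[OF tendsto_cdf_at_right_0 \<open>0 < f\<close>]
    by eventually_elim auto
  then obtain a where a: "0 < a" "cdf a < f"
    using eventually_happens'[of "at_right (0::real)"] by auto
  have "\<forall>\<^sub>F b in at_top. a < b \<and> f < cdf b"
    using eventually_gt_at_top[of a] order_tendstoD(1)[OF tendsto_cdf_at_top \<open>f < 1\<close>]
    by eventually_elim auto
  then obtain b where b: "a < b" "f < cdf b"
    using eventually_happens'[of "at_top :: real filter"] by auto
  have "continuous_on {a..b} cdf"
    using a by (intro continuous_at_imp_continuous_on ballI DERIV_isCont[OF cdf_has_real_derivative]) auto
  then obtain w where "a \<le> w" "w \<le> b" "cdf w = f"
    using IVT'[of cdf a f b] a b by auto
  moreover have "v = w" if "0 < v" "cdf v = cdf w" "0 < w" for v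
    using that cdf_less_iff[of v w] cdf_less_iff[of w v] by (metis linorder_neq_iff)
  ultimately show ?thesis
    using a by (intro ex1I[of _ w]) auto
qed

lemma
  assumes "0 < f" "f < 1"
  shows quantile_pos: "0 < quantile f" and cdf_quantile: "cdf (quantile f) = f"
  using theI'[OF ex1_cdf_eq[OF assms]] unfolding quantile_def by auto

lemma quantile_cdf: "0 < w \<Longrightarrow> quantile (cdf w) = w"
  unfolding quantile_def using ex1_cdf_eq[OF cdf_bounds] by (intro the1_equality) auto

lemma less_quantile_iff:
  "0 < f \<Longrightarrow> f < 1 \<Longrightarrow> 0 < a \<Longrightarrow> a < quantile f \<longleftrightarrow> cdf a < f"
  using cdf_less_iff[of a "quantile f"] quantile_pos[of f] cdf_quantile[of f] by simp

lemma quantile_less_iff: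
  "0 < f \<Longrightarrow> f < 1 \<Longrightarrow> 0 < b \<Longrightarrow> quantile f < b \<longleftrightarrow> f < cdf b"
  using cdf_less_iff[of "quantile f" b] quantile_pos[of f] cdf_quantile[of f] by simp

lemma isCont_quantile:
  assumes "0 < f" "f < 1"
  shows "isCont quantile f"
proof -
  define w where "w = quantile f"
  have w: "0 < w" "cdf w = f"
    using quantile_pos[OF assms] cdf_quantile[OF assms] by (simp_all add: w_def)
  have near: "0 < z" if "\<bar>z - w\<bar> \<le> w / 2" for z
    using that w by linarith
  have "isCont quantile (cdf w)"
    by (rule isCont_inverse_function[where d="w / 2"])
      (use w near in \<open>auto intro: quantile_cdf DERIV_isCont[OF cdf_has_real_derivative]\<close>)
  then show ?thesis using w by simp
qed

lemma quantile_has_real_derivative: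
  assumes "0 < f" "f < 1"
  shows "(quantile has_real_derivative inverse (p (quantile f))) (at f)"
proof (rule DERIV_inverse_function[where a=0 and b=1])
  show "(cdf has_real_derivative p (quantile f)) (at (quantile f))"
    using quantile_pos[OF assms] by (rule cdf_has_real_derivative)
  show "p (quantile f) \<noteq> 0"
    using density_pos[OF quantile_pos[OF assms]] by simp
qed (use assms cdf_quantile isCont_quantile in auto)

lemma partial_moment_quantile_has_real_derivative:
  assumes "0 < f" "f < 1"
  shows "((\<lambda>h. partial_moment (quantile h)) has_real_derivative quantile f) (at f)"
proof -
  have "((\<lambda>h. partial_moment (quantile h)) has_real_derivative
      (quantile f * p (quantile f)) * inverse (p (quantile f))) (at f)"
    by (rule DERIV_chain2[OF partial_moment_has_real_derivative quantile_has_real_derivative[OF assms]])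
      (use quantile_pos[OF assms] in auto)
  then show ?thesis
    using density_pos[OF quantile_pos[OF assms]] by (simp add: mult.assoc)
qed

lemma deriv_partial_moment_quantile:
  "0 < f \<Longrightarrow> f < 1 \<Longrightarrow> deriv (\<lambda>h. partial_moment (quantile h)) f = quantile f"
  by (rule DERIV_imp_deriv[OF partial_moment_quantile_has_real_derivative])

lemma deriv_partial_moment_quantile_has_real_derivative:
  assumes "0 < f" "f < 1"
  shows "(deriv (\<lambda>h. partial_moment (quantile h)) has_real_derivative inverse (p (quantile f))) (at f)"
  by (rule has_field_derivative_transform_within_open[OF quantile_has_real_derivative[OF assms],
        where S="{0<..<1}"]) (use assms deriv_partial_moment_quantile in auto)

lemma partial_moment_minus_cdf:
  "partial_moment x - v * cdf x = (LBINT y:{0<..x}. (y - v) * p y)"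
proof -
  have "set_integrable lborel {0<..x} (\<lambda>y. y * p y)" "set_integrable lborel {0<..x} p"
    by (auto intro: set_integrable_subset[OF moment_integrable] set_integrable_subset[OF density_integrable])
  then show ?thesis
    by (simp add: partial_moment_def cdf_def left_diff_distrib set_integral_diff)
qed

lemma partial_moment_deviation_le:
  assumes "0 < v" "0 < x"
  shows "\<bar>partial_moment x - partial_moment v - v * (cdf x - cdf v)\<bar> \<le> \<bar>x - v\<bar> * \<bar>cdf x - cdf v\<bar>"
proof -
  define H where "H z = partial_moment z - v * cdf z" for z
  have between: "0 < z" if "min v x \<le> z" for z
    using that assms by linarith
  have dH: "(H has_real_derivative (z - v) * p z) (at z)" if "0 < z" for z
    unfolding H_def[abs_def] using that
    by (auto intro!: derivative_eq_intros partial_moment_has_real_derivative cdf_has_real_derivative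
        simp: algebra_simps)
  define K where "K z = (z - v) * (cdf z - cdf v) - (H z - H v)" for z
  have dK: "(K has_real_derivative cdf z - cdf v) (at z)" if "0 < z" for z
    unfolding K_def[abs_def] using that
    by (auto intro!: derivative_eq_intros cdf_has_real_derivative dH simp: algebra_simps)
  have sign: "0 \<le> (z - v) * (cdf z - cdf v)" if "0 < z" for z
    using cdf_le_iff[of z v] cdf_le_iff[of v z] that assms
    by (cases "z \<le> v") (auto simp: mult_nonpos_nonpos)
  have "0 \<le> H x - H v"
    unfolding diff_ge_0_iff_ge
  proof (rule DERIV_sign_imp_min[OF dH])
    fix z assume "min v x \<le> z"
    then show "0 < z" by (rule between)
    then have "0 \<le> p z" by (simp add: density_pos less_imp_le)
    then show "0 \<le> (z - v) * ((z - v) * p z)" by (simp add: mult.assoc[symmetric])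
  qed
  moreover have "H x - H v \<le> \<bar>x - v\<bar> * \<bar>cdf x - cdf v\<bar>"
  proof -
    have "K v \<le> K x"
      by (rule DERIV_sign_imp_min[OF dK]) (auto intro: between sign)
    moreover have "\<bar>x - v\<bar> * \<bar>cdf x - cdf v\<bar> = (x - v) * (cdf x - cdf v)"
      using cdf_le_iff[of x v] cdf_le_iff[of v x] assms
      by (cases "x \<le> v") (auto simp: abs_mult abs_of_nonpos algebra_simps)
    ultimately show ?thesis
      by (simp add: K_def)
  qed
  moreover have "H x - H v = partial_moment x - partial_moment v - v * (cdf x - cdf v)"
    by (simp add: H_def algebra_simps)
  ultimately show ?thesis
    by (metis abs_of_nonneg)
qed

lemma set_integral_quantile_substitution:
  fixes \<phi> :: "real \<Rightarrow> real"
  assumes cont: "continuous_on {0<..} \<phi>" and bounded: "\<And>x. 0 < x \<Longrightarrow> \<bar>\<phi> x\<bar> \<le> B"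
  shows "(LBINT g:{0<..<1}. \<phi> (quantile g)) = (LBINT x:{0<..}. \<phi> x * p x)"
proof -
  \<comment> \<open>The substitution rule needs a derivative of \<open>cdf\<close> that is nonnegative also at 0,
    where \<open>p\<close> is unconstrained.\<close>
  define q where "q x = max 0 (p x)" for x
  have q: "q x = p x" if "0 < x" for x
    using density_pos[OF that] by (simp add: q_def)
  have isCont_\<phi>: "isCont \<phi> x" if "0 < x" for x
    using cont that by (simp add: continuous_on_eq_continuous_at)
  have isCont_\<phi>_quantile: "isCont (\<lambda>g. \<phi> (quantile g)) g" if "0 < g" "g < 1" for g
    using that quantile_pos[OF that] by (intro isCont_o2[OF isCont_quantile] isCont_\<phi>)
  have "set_integrable lborel {0<..} (\<lambda>x. \<phi> x * p x)"
  proof (rule set_integrable_continuous_on_bound[where g="\<lambda>x. B * p x"])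
    show "continuous_on {0<..} (\<lambda>x. \<phi> x * p x)"
      by (intro continuous_intros cont density_continuous)
    show "\<bar>\<phi> x * p x\<bar> \<le> B * p x" if "x \<in> {0<..}" for x
      using bounded[of x] density_pos[of x] that by (simp add: abs_mult mult_right_mono)
  qed (auto intro: set_integrable_mult_right[OF density_integrable])
  then have int_\<phi>_density:
    "set_integrable lborel (einterval (ereal 0) \<infinity>) (\<lambda>x. q x *\<^sub>R \<phi> (quantile (cdf x)))"
    by (rule set_integrable_cong[THEN iffD1, rotated 3]) (auto simp: q quantile_cdf)
  have int_B: "set_integrable lborel {0<..<1} (\<lambda>g::real. B)"
    by (rule set_integrable_subset[OF borel_integrable_atLeastAtMost'[where a=0 and b=1]]) auto
  have int_\<phi>_quantile: "set_integrable lborel (einterval (ereal 0) (ereal 1)) (\<lambda>g. \<phi> (quantile g))"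
    unfolding einterval_eq
  proof (rule set_integrable_continuous_on_bound[OF _ _ int_B])
    show "continuous_on {0<..<1} (\<lambda>g. \<phi> (quantile g))"
      by (intro continuous_at_imp_continuous_on ballI isCont_\<phi>_quantile) auto
    show "\<bar>\<phi> (quantile g)\<bar> \<le> B" if "g \<in> {0<..<1}" for g
      using that by (intro bounded quantile_pos) auto
  qed simp
  have "(LBINT g=ereal 0..ereal 1. \<phi> (quantile g))
      = (LBINT x=ereal 0..\<infinity>. q x *\<^sub>R \<phi> (quantile (cdf x)))"
  proof (rule interval_integral_substitution_integrable[OF _ _ _ _ _ _ _ int_\<phi>_density int_\<phi>_quantile])
    show "((ereal \<circ> cdf \<circ> real_of_ereal) \<longlongrightarrow> ereal 0) (at_right (ereal 0))"
      unfolding ereal_tendsto_simps1 ereal_tendsto_simps2 by (rule tendsto_cdf_at_right_0)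
    show "((ereal \<circ> cdf \<circ> real_of_ereal) \<longlongrightarrow> ereal 1) (at_left \<infinity>)"
      unfolding ereal_tendsto_simps1 ereal_tendsto_simps2 by (rule tendsto_cdf_at_top)
    show "(cdf has_real_derivative q x) (at x)" if "ereal 0 < ereal x" "ereal x < \<infinity>" for x
      using that by (simp add: q cdf_has_real_derivative)
    show "isCont (\<lambda>g. \<phi> (quantile g)) (cdf x)" if "ereal 0 < ereal x" "ereal x < \<infinity>" for x
      using that cdf_bounds[of x] by (intro isCont_\<phi>_quantile) auto
    show "isCont q x" if "ereal 0 < ereal x" "ereal x < \<infinity>" for x
      using that density_continuous unfolding q_def
      by (intro continuous_intros) (simp add: continuous_on_eq_continuous_at)
  qed (auto simp: q_def)
  also have "\<dots> = (LBINT x:{0<..}. \<phi> x * p x)"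
    by (auto simp: interval_integral_Ioi q quantile_cdf intro!: set_lebesgue_integral_cong)
  finally show ?thesis
    by (simp add: interval_lebesgue_integral_def)
qed

end

locale density_flow =
  fixes \<rho> \<rho>t :: "real \<Rightarrow> real \<Rightarrow> real"
  assumes density: "\<And>s. 0 < s \<Longrightarrow> wealth_density (\<lambda>w. \<rho> w s)"
    and has_time_derivative:
      "\<And>w s. 0 < w \<Longrightarrow> 0 < s \<Longrightarrow> ((\<lambda>r. \<rho> w r) has_real_derivative \<rho>t w s) (at s)"
    and time_derivative_continuous: "\<And>s. 0 < s \<Longrightarrow> continuous_on {0<..} (\<lambda>w. \<rho>t w s)"
    and time_derivative_dominated: "\<And>s. 0 < s \<Longrightarrow> \<exists>e>0. \<exists>g. set_integrable lborel {0<..} g \<and>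
                 (\<forall>r\<in>{s - e<..<s + e}. \<forall>w>0. \<bar>\<rho>t w r\<bar> \<le> g w)"
begin

lemma ysm_F_eq: "0 < s \<Longrightarrow> ysm_F \<rho> w s = wealth_density.cdf (\<lambda>y. \<rho> y s) w"
  by (simp add: ysm_F_def wealth_density.cdf_def[OF density])

lemma ysm_G_eq: "0 < s \<Longrightarrow> ysm_G \<rho> f s = wealth_density.quantile (\<lambda>y. \<rho> y s) f"
  by (simp add: ysm_G_def wealth_density.quantile_def[OF density] ysm_F_eq)

lemma lorenz_eq: "0 < s \<Longrightarrow>
    lorenz \<rho> f s = wealth_density.partial_moment (\<lambda>y. \<rho> y s) (wealth_density.quantile (\<lambda>y. \<rho> y s) f)"
  by (simp add: lorenz_def wealth_density.partial_moment_def[OF density] ysm_G_eq)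

lemma set_integrable_time_derivative:
  assumes "0 < t"
  shows "set_integrable lborel {0<..} (\<lambda>w. \<rho>t w t)"
proof -
  obtain e g where "0 < e" and g: "set_integrable lborel {0<..} g"
    and bound: "\<forall>r\<in>{t - e<..<t + e}. \<forall>w>0. \<bar>\<rho>t w r\<bar> \<le> g w"
    using time_derivative_dominated[OF assms] by blast
  show ?thesis
  proof (rule set_integrable_continuous_on_bound[OF _ time_derivative_continuous[OF assms] g])
    show "\<bar>\<rho>t w t\<bar> \<le> g w" if "w \<in> {0<..}" for w
      using bound \<open>0 < e\<close> that by auto
  qed simp
qed

lemma has_real_derivative_weighted_mass:
  assumes t: "0 < t" and "0 < W"
    and q: "continuous_on {0<..W} q" and q_bound: "\<And>y. 0 < y \<Longrightarrow> y \<le> W \<Longrightarrow> \<bar>q y\<bar> \<le> C"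
  shows "((\<lambda>s. LBINT y:{0<..W}. q y * \<rho> y s) has_real_derivative (LBINT y:{0<..W}. q y * \<rho>t y t)) (at t)"
proof -
  obtain e g where "0 < e" and g: "set_integrable lborel {0<..} g"
    and g_bound: "\<And>r w. r \<in> {t - e<..<t + e} \<Longrightarrow> 0 < w \<Longrightarrow> \<bar>\<rho>t w r\<bar> \<le> g w"
    using time_derivative_dominated[OF t] by blast
  define d where "d = min e t"
  have near: "0 < s" "s \<in> {t - e<..<t + e}" if "s \<in> ball t d" for s
    using that by (auto simp: d_def dist_real_def)
  have "((\<lambda>s. \<integral>y. indicator {0<..W} y * (q y * \<rho> y s) \<partial>lborel) has_real_derivative
      (\<integral>y. indicator {0<..W} y * (q y * \<rho>t y t) \<partial>lborel)) (at t)"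
  proof (rule has_real_derivative_integral[where e=d and g="\<lambda>y. C * \<bar>indicator {0<..} y * g y\<bar>"])
    show "0 < d"
      using \<open>0 < e\<close> t by (simp add: d_def)
    show "integrable lborel (\<lambda>y. indicator {0<..W} y * (q y * \<rho> y s))" if "s \<in> ball t d" for s
      using wealth_density.set_integrable_bounded_mult[OF density[OF near(1)[OF that]] q q_bound]
      by (simp add: set_integrable_def)
    have "continuous_on {0<..W} (\<lambda>y. q y * \<rho>t y t)"
      by (intro continuous_intros q continuous_on_subset[OF time_derivative_continuous[OF t]]) auto
    from borel_measurable_continuous_on_indicator[OF _ this]
    show "(\<lambda>y. indicator {0<..W} y * (q y * \<rho>t y t)) \<in> borel_measurable lborel"
      by simp
    show "((\<lambda>r. indicator {0<..W} y * (q y * \<rho> y r)) has_real_derivative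
        indicator {0<..W} y * (q y * \<rho>t y s)) (at s)" if "s \<in> ball t d" for y s
      using near[OF that] by (cases "y \<in> {0<..W}") (auto intro!: derivative_eq_intros has_time_derivative)
    show "\<bar>indicator {0<..W} y * (q y * \<rho>t y s)\<bar> \<le> C * \<bar>indicator {0<..} y * g y\<bar>"
      if "s \<in> ball t d" for y s
    proof (cases "y \<in> {0<..W}")
      case True
      then have "\<bar>q y\<bar> * \<bar>\<rho>t y s\<bar> \<le> C * \<bar>g y\<bar>"
        using q_bound[of y] g_bound[OF near(2)[OF that], of y] by (intro mult_mono) auto
      then show ?thesis
        using True by (simp add: abs_mult)
    qed (use q_bound[of W] \<open>0 < W\<close> in auto)
    show "integrable lborel (\<lambda>y. C * \<bar>indicator {0<..} y * g y\<bar>)"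
      using g by (simp add: set_integrable_def)
  qed
  then show ?thesis
    by (simp add: set_lebesgue_integral_def)
qed

lemma ysm_F_has_time_derivative:
  "0 < t \<Longrightarrow> 0 < w \<Longrightarrow>
    ((\<lambda>s. ysm_F \<rho> w s) has_real_derivative (LBINT y:{0<..w}. \<rho>t y t)) (at t)"
  using has_real_derivative_weighted_mass[of t w "\<lambda>y. 1" 1] by (simp add: ysm_F_def)

lemma tendsto_ysm_G:
  assumes t: "0 < t" and f: "0 < f" "f < 1"
  shows "((\<lambda>s. ysm_G \<rho> f s) \<longlongrightarrow> ysm_G \<rho> f t) (at t)"
proof (rule tendstoI)
  fix \<epsilon> :: real assume "0 < \<epsilon>"
  interpret P: wealth_density "\<lambda>w. \<rho> w t" by (rule density[OF t])
  define v where "v = P.quantile f"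
  define \<delta> where "\<delta> = min \<epsilon> (v / 2)"
  have v: "0 < v" "P.cdf v = f"
    using P.quantile_pos[OF f] P.cdf_quantile[OF f] by (simp_all add: v_def)
  have \<delta>: "0 < \<delta>" "\<delta> \<le> \<epsilon>" "0 < v - \<delta>"
    using \<open>0 < \<epsilon>\<close> v by (auto simp: \<delta>_def)
  have F_cont: "((\<lambda>s. ysm_F \<rho> w s) \<longlongrightarrow> ysm_F \<rho> w t) (at t)" if "0 < w" for w
    using DERIV_isCont[OF ysm_F_has_time_derivative[OF t that]] by (simp add: isCont_def)
  have "ysm_F \<rho> (v - \<delta>) t < f" "f < ysm_F \<rho> (v + \<delta>) t"
    using P.cdf_less_iff[of "v - \<delta>" v] P.cdf_less_iff[of v "v + \<delta>"] v \<delta> by (auto simp: ysm_F_eq[OF t])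
  then have "\<forall>\<^sub>F s in at t. 0 < s \<and> ysm_F \<rho> (v - \<delta>) s < f \<and> f < ysm_F \<rho> (v + \<delta>) s"
    using order_tendstoD(1)[OF tendsto_ident_at t] v \<delta>
      order_tendstoD(2)[OF F_cont[of "v - \<delta>"]] order_tendstoD(1)[OF F_cont[of "v + \<delta>"]]
    by (auto intro!: eventually_conj)
  then show "\<forall>\<^sub>F s in at t. dist (ysm_G \<rho> f s) (ysm_G \<rho> f t) < \<epsilon>"
  proof eventually_elim
    case (elim s)
    interpret S: wealth_density "\<lambda>w. \<rho> w s" by (rule density) (use elim in auto)
    have "v - \<delta> < S.quantile f" "S.quantile f < v + \<delta>"
      using S.less_quantile_iff[OF f, of "v - \<delta>"] S.quantile_less_iff[OF f, of "v + \<delta>"] elim v \<delta>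
      by (auto simp: ysm_F_eq)
    moreover have "ysm_G \<rho> f s = S.quantile f" "ysm_G \<rho> f t = v"
      using elim t by (simp_all add: ysm_G_eq v_def)
    ultimately show ?case
      using \<delta> by (simp add: dist_real_def abs_less_iff)
  qed
qed

lemma lorenz_has_time_derivative:
  assumes t: "0 < t" and f: "0 < f" "f < 1"
  defines "v \<equiv> ysm_G \<rho> f t"
  shows "((\<lambda>s. lorenz \<rho> f s) has_real_derivative (LBINT y:{0<..v}. (y - v) * \<rho>t y t)) (at t)"
proof -
  interpret P: wealth_density "\<lambda>w. \<rho> w t" by (rule density[OF t])
  have v: "0 < v" "ysm_F \<rho> v t = f" "v = P.quantile f"
    using P.quantile_pos[OF f] P.cdf_quantile[OF f] t by (auto simp: v_def ysm_G_eq ysm_F_eq)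
  define K where "K s = (LBINT y:{0<..v}. (y - v) * \<rho> y s)" for s
  define R where "R s = lorenz \<rho> f s - lorenz \<rho> f t - (K s - K t)" for s
  have "(K has_real_derivative (LBINT y:{0<..v}. (y - v) * \<rho>t y t)) (at t)"
    unfolding K_def[abs_def] using v
    by (intro has_real_derivative_weighted_mass[where C=v] t continuous_intros) auto
  moreover have "((\<lambda>s. R s / (s - t)) \<longlongrightarrow> 0) (at t)"
  proof (rule Lim_null_comparison)
    show "\<forall>\<^sub>F s in at t. norm (R s / (s - t))
        \<le> \<bar>ysm_G \<rho> f s - v\<bar> * \<bar>(ysm_F \<rho> v s - ysm_F \<rho> v t) / (s - t)\<bar>"
      using order_tendstoD(1)[OF tendsto_ident_at t]
    proof eventually_elim
      case (elim s)
      interpret S: wealth_density "\<lambda>w. \<rho> w s" by (rule density[OF elim])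
      have "K s = S.partial_moment v - v * S.cdf v" "K t = P.partial_moment v - v * f"
        using S.partial_moment_minus_cdf[of v v] P.partial_moment_minus_cdf[of v v] v t
        by (simp_all add: K_def ysm_F_eq)
      moreover have "lorenz \<rho> f s = S.partial_moment (S.quantile f)" "lorenz \<rho> f t = P.partial_moment v"
        using elim t v by (simp_all add: lorenz_eq)
      ultimately have "R s = S.partial_moment (S.quantile f) - S.partial_moment v
          - v * (S.cdf (S.quantile f) - S.cdf v)"
        using S.cdf_quantile[OF f] by (simp add: R_def algebra_simps)
      then have "\<bar>R s\<bar> \<le> \<bar>S.quantile f - v\<bar> * \<bar>S.cdf (S.quantile f) - S.cdf v\<bar>"
        using S.quantile_pos[OF f] v by (simp add: S.partial_moment_deviation_le)
      also have "\<dots> = \<bar>ysm_G \<rho> f s - v\<bar> * \<bar>ysm_F \<rho> v s - ysm_F \<rho> v t\<bar>"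
        using S.cdf_quantile[OF f] v elim by (simp add: ysm_G_eq ysm_F_eq abs_minus_commute[of f])
      finally have "\<bar>R s\<bar> / \<bar>s - t\<bar>
          \<le> \<bar>ysm_G \<rho> f s - v\<bar> * \<bar>ysm_F \<rho> v s - ysm_F \<rho> v t\<bar> / \<bar>s - t\<bar>"
        by (rule divide_right_mono) simp
      then show ?case
        by (simp add: abs_divide)
    qed
    have "((\<lambda>s. ysm_G \<rho> f s - v) \<longlongrightarrow> 0) (at t)"
      unfolding v_def by (rule LIM_zero[OF tendsto_ysm_G[OF t f]])
    moreover have "((\<lambda>s. (ysm_F \<rho> v s - ysm_F \<rho> v t) / (s - t)) \<longlongrightarrow> (LBINT y:{0<..v}. \<rho>t y t)) (at t)"
      using ysm_F_has_time_derivative[OF t v(1)] unfolding has_field_derivative_iff .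
    ultimately have "((\<lambda>s. \<bar>ysm_G \<rho> f s - v\<bar> * \<bar>(ysm_F \<rho> v s - ysm_F \<rho> v t) / (s - t)\<bar>)
        \<longlongrightarrow> \<bar>0\<bar> * \<bar>LBINT y:{0<..v}. \<rho>t y t\<bar>) (at t)"
      by (intro tendsto_mult tendsto_rabs)
    then show "((\<lambda>s. \<bar>ysm_G \<rho> f s - v\<bar> * \<bar>(ysm_F \<rho> v s - ysm_F \<rho> v t) / (s - t)\<bar>)
        \<longlongrightarrow> 0) (at t)"
      by simp
  qed
  ultimately have "((\<lambda>s. (K s - K t) / (s - t) + R s / (s - t))
      \<longlongrightarrow> (LBINT y:{0<..v}. (y - v) * \<rho>t y t) + 0) (at t)"
    unfolding has_field_derivative_iff by (rule tendsto_add)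
  moreover have "(K s - K t) / (s - t) + R s / (s - t) = (lorenz \<rho> f s - lorenz \<rho> f t) / (s - t)" for s
    unfolding R_def by (simp add: add_divide_distrib[symmetric])
  ultimately show ?thesis
    by (simp add: has_field_derivative_iff)
qed

lemma lorenz_has_time_derivative_diffusion:
  assumes t: "0 < t" and f: "0 < f" "f < 1"
    and dP: "\<And>w. 0 < w \<Longrightarrow> (P has_real_derivative J w) (at w)"
    and dJ: "\<And>w. 0 < w \<Longrightarrow> (J has_real_derivative \<rho>t w t) (at w)"
    and P0: "(P \<longlongrightarrow> 0) (at_right 0)" and J0: "(J \<longlongrightarrow> 0) (at_right 0)"
  shows "((\<lambda>s. lorenz \<rho> f s) has_real_derivative - P (ysm_G \<rho> f t)) (at t)"
proof -
  interpret P: wealth_density "\<lambda>w. \<rho> w t" by (rule density[OF t])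
  have "0 < ysm_G \<rho> f t"
    using P.quantile_pos[OF f] t by (simp add: ysm_G_eq)
  then have "(LBINT y:{0<..ysm_G \<rho> f t}. (y - ysm_G \<rho> f t) * \<rho>t y t) = - P (ysm_G \<rho> f t)"
    by (intro set_integral_Ioc_Taylor_remainder[OF _ dP dJ time_derivative_continuous[OF t] _ P0 J0]
        set_integrable_subset[OF set_integrable_time_derivative[OF t]]) auto
  then show ?thesis
    using lorenz_has_time_derivative[OF t f] by simp
qed

lemma lorenz_has_real_derivative:
  assumes "0 < t" "0 < g" "g < 1"
  shows "((\<lambda>h. lorenz \<rho> h t) has_real_derivative ysm_G \<rho> g t) (at g)"
proof -
  interpret P: wealth_density "\<lambda>w. \<rho> w t" by (rule density[OF \<open>0 < t\<close>])
  show ?thesis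
    using P.partial_moment_quantile_has_real_derivative[OF assms(2,3)] \<open>0 < t\<close>
    by (simp add: lorenz_eq ysm_G_eq)
qed

lemma deriv_lorenz_has_real_derivative:
  assumes "0 < t" "0 < f" "f < 1"
  shows "(deriv (\<lambda>h. lorenz \<rho> h t) has_real_derivative inverse (\<rho> (ysm_G \<rho> f t) t)) (at f)"
proof -
  interpret P: wealth_density "\<lambda>w. \<rho> w t" by (rule density[OF \<open>0 < t\<close>])
  show ?thesis
    using P.deriv_partial_moment_quantile_has_real_derivative[OF assms(2,3)] \<open>0 < t\<close>
    by (simp add: lorenz_eq ysm_G_eq)
qed

lemma ysm_D_eq_lorenz_integral:
  assumes "0 < t" "0 < f" "f < 1"
  shows "ysm_D \<gamma> \<rho> (ysm_G \<rho> f t) t = \<gamma> / 2 * (LBINT g:{0<..<1}.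
    (min (deriv (\<lambda>h. lorenz \<rho> h t) g) (deriv (\<lambda>h. lorenz \<rho> h t) f))\<^sup>2)"
proof -
  interpret P: wealth_density "\<lambda>w. \<rho> w t" by (rule density[OF \<open>0 < t\<close>])
  define w where "w = ysm_G \<rho> f t"
  have w: "0 < w"
    using P.quantile_pos[OF assms(2,3)] \<open>0 < t\<close> by (simp add: w_def ysm_G_eq)
  have "(LBINT x:{0<..}. (min w x)\<^sup>2 * \<rho> x t) = (LBINT g:{0<..<1}. (min w (P.quantile g))\<^sup>2)"
    using w by (intro P.set_integral_quantile_substitution[where B="w\<^sup>2", symmetric])
      (auto intro!: continuous_intros power_mono simp: abs_le_iff)
  also have "\<dots> = (LBINT g:{0<..<1}.
      (min (deriv (\<lambda>h. lorenz \<rho> h t) g) (deriv (\<lambda>h. lorenz \<rho> h t) f))\<^sup>2)"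
    using DERIV_imp_deriv[OF lorenz_has_real_derivative[OF \<open>0 < t\<close>]] assms \<open>0 < t\<close>
    by (intro set_lebesgue_integral_cong) (auto simp: w_def ysm_G_eq min.commute)
  finally show ?thesis
    by (simp add: ysm_D_def w_def)
qed

end

theorem mainTheorem2:
  fixes \<gamma> :: real
    and \<rho> \<rho>t J1 :: "real \<Rightarrow> real \<Rightarrow> real"
    and f t :: real
  assumes gamma: "0 < \<gamma>" "\<gamma> < 1"
    and pos: "\<And>w s. 0 < w \<Longrightarrow> 0 \<le> s \<Longrightarrow> 0 < \<rho> w s"
    and init_mass: "set_integrable lborel {0<..} (\<lambda>x. \<rho> x 0)"
        "(LBINT x:{0<..}. \<rho> x 0) = 1"
    and init_moment: "set_integrable lborel {0<..} (\<lambda>x. x * \<rho> x 0)"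
        "(LBINT x:{0<..}. x * \<rho> x 0) = 1"
    and mass: "\<And>s. 0 \<le> s \<Longrightarrow> set_integrable lborel {0<..} (\<lambda>x. \<rho> x s)
                   \<and> (LBINT x:{0<..}. \<rho> x s) = 1"
    and moment: "\<And>s. 0 \<le> s \<Longrightarrow> set_integrable lborel {0<..} (\<lambda>x. x * \<rho> x s)
                   \<and> (LBINT x:{0<..}. x * \<rho> x s) = 1"
    and cont: "continuous_on ({0<..} \<times> {0..}) (\<lambda>(w, s). \<rho> w s)"
    and deriv_t: "\<And>w s. 0 < w \<Longrightarrow> 0 < s \<Longrightarrow> ((\<lambda>r. \<rho> w r) has_real_derivative \<rho>t w s) (at s)"
    and cont_t: "continuous_on ({0<..} \<times> {0<..}) (\<lambda>(w, s). \<rho>t w s)"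
    and flux: "\<And>w s. 0 < w \<Longrightarrow> 0 < s \<Longrightarrow>
                 ((\<lambda>v. ysm_D \<gamma> \<rho> v s * \<rho> v s) has_real_derivative J1 w s) (at w)"
    and pde: "\<And>w s. 0 < w \<Longrightarrow> 0 < s \<Longrightarrow> ((\<lambda>v. J1 v s) has_real_derivative \<rho>t w s) (at w)"
    and bc_zero: "\<And>s. 0 < s \<Longrightarrow> \<rho> 0 s = 0"
    and bc_inf: "\<And>s. 0 < s \<Longrightarrow> ((\<lambda>w. \<rho> w s) \<longlongrightarrow> 0) at_top"
    and bd1: "\<And>s. 0 < s \<Longrightarrow> ((\<lambda>w. ysm_D \<gamma> \<rho> w s * \<rho> w s) \<longlongrightarrow> 0) (at_right 0)"
    and bd2: "\<And>s. 0 < s \<Longrightarrow> ((\<lambda>w. w * J1 w s) \<longlongrightarrow> 0) (at_right 0)"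
    and bd3: "\<And>s. 0 < s \<Longrightarrow> ((\<lambda>w. J1 w s) \<longlongrightarrow> 0) (at_right 0)"
    and dom: "\<And>s. 0 < s \<Longrightarrow> \<exists>e>0. \<exists>g. set_integrable lborel {0<..} g \<and>
                 (\<forall>r\<in>{s - e<..<s + e}. \<forall>w>0. \<bar>\<rho>t w r\<bar> \<le> g w \<and> \<bar>w * \<rho>t w r\<bar> \<le> g w)"
    and f: "0 < f" "f < 1"
    and t: "0 < t"
  shows "(\<lambda>s. lorenz \<rho> f s) differentiable (at t)
      \<and> (\<forall>g\<in>{0<..<1}. (\<lambda>h. lorenz \<rho> h t) differentiable (at g))
      \<and> (\<lambda>g. deriv (\<lambda>h. lorenz \<rho> h t) g) differentiable (at f)
      \<and> deriv (\<lambda>s. lorenz \<rho> f s) t =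
          - (1 / deriv (\<lambda>g. deriv (\<lambda>h. lorenz \<rho> h t) g) f)
            * (\<gamma> / 2 * (LBINT g:{0<..<1}.
                 (min (deriv (\<lambda>h. lorenz \<rho> h t) g) (deriv (\<lambda>h. lorenz \<rho> h t) f))\<^sup>2))"
proof -
  interpret density_flow \<rho> \<rho>t
  proof (rule density_flow.intro)
    show "wealth_density (\<lambda>w. \<rho> w s)" if "0 < s" for s
      using pos mass moment continuous_on_slice[OF cont] that by unfold_locales auto
    show "continuous_on {0<..} (\<lambda>w. \<rho>t w s)" if "0 < s" for s
      using continuous_on_slice[OF cont_t] that by simp
    show "\<exists>e>0. \<exists>g. set_integrable lborel {0<..} g \<and>
        (\<forall>r\<in>{s - e<..<s + e}. \<forall>w>0. \<bar>\<rho>t w r\<bar> \<le> g w)" if "0 < s" for s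
      using dom[OF that] by meson
  qed (rule deriv_t)
  have dtL: "((\<lambda>s. lorenz \<rho> f s) has_real_derivative
      - (ysm_D \<gamma> \<rho> (ysm_G \<rho> f t) t * \<rho> (ysm_G \<rho> f t) t)) (at t)"
    by (rule lorenz_has_time_derivative_diffusion[OF t f flux[OF _ t] pde[OF _ t] bd1[OF t] bd3[OF t]])
  note d2L = deriv_lorenz_has_real_derivative[OF t f]
  show ?thesis
    using dtL d2L lorenz_has_real_derivative[OF t]
    unfolding DERIV_imp_deriv[OF dtL] DERIV_imp_deriv[OF d2L] ysm_D_eq_lorenz_integral[OF t f, symmetric]
    by (auto simp: real_differentiable_def divide_inverse) blast
qed

end
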